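(* Let $q=2^m>4$ and let $l$ be an integer with $0\leq l\leq 3$. Then there exists a linear $l$-intersection pair of two MDS codes over $\mathbb{F}_q$ both with parameters $[q+2,3,q]_q$.
   Context: An $[n,k,d]_q$ linear code is a $k$-dimensional subspace of $\mathbb{F}_q^n$ with minimum Hamming distance $d$; it is MDS if $d=n-k+1$. Two linear codes $C_1,C_2\subseteq\mathbb{F}_q^n$ form a linear $l$-intersection pair if $\dim(C_1\cap C_2)=l$. *)

theory Defs
  imports Complex_Main "HOL-Library.Function_Algebras"
begin

text \<open>Vectors of \<open>F_q^n\<close> are modelled as functions \<open>nat \<Rightarrow> 'a\<close> vanishing outside \<open>{..<n}\<close>.
  Scalar multiplication is pointwise.\<close>

definition vscale :: "'a::field \<Rightarrow> (nat \<Rightarrow> 'a) \<Rightarrow> (nat \<Rightarrow> 'a)" where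
  "vscale c v = (\<lambda>i. c * v i)"

lemma vector_space_vscale: "vector_space (vscale :: 'a::field \<Rightarrow> _)"
  by unfold_locales (auto simp: vscale_def fun_eq_iff algebra_simps)

definition ambient :: "nat \<Rightarrow> (nat \<Rightarrow> 'a::zero) set" where
  "ambient n = {v. \<forall>i\<ge>n. v i = 0}"

definition hamming_dist :: "nat \<Rightarrow> (nat \<Rightarrow> 'a) \<Rightarrow> (nat \<Rightarrow> 'a) \<Rightarrow> nat" where
  "hamming_dist n x y = card {i. i < n \<and> x i \<noteq> y i}"

definition linear_code :: "nat \<Rightarrow> (nat \<Rightarrow> 'a::field) set \<Rightarrow> bool" where
  "linear_code n C \<longleftrightarrow> C \<subseteq> ambient n \<and> module.subspace vscale C"

definition code_dim :: "(nat \<Rightarrow> 'a::field) set \<Rightarrow> nat" where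
  "code_dim C = vector_space.dim vscale C"

definition min_dist :: "nat \<Rightarrow> (nat \<Rightarrow> 'a) set \<Rightarrow> nat" where
  "min_dist n C = Min {hamming_dist n x y | x y. x \<in> C \<and> y \<in> C \<and> x \<noteq> y}"

definition is_nkd_code :: "nat \<Rightarrow> nat \<Rightarrow> nat \<Rightarrow> (nat \<Rightarrow> 'a::field) set \<Rightarrow> bool" where
  "is_nkd_code n k d C \<longleftrightarrow> linear_code n C \<and> code_dim C = k \<and> min_dist n C = d"

definition is_MDS :: "nat \<Rightarrow> (nat \<Rightarrow> 'a::field) set \<Rightarrow> bool" where
  "is_MDS n C \<longleftrightarrow> linear_code n C \<and> min_dist n C = n - code_dim C + 1"

definition l_intersection_pair :: "nat \<Rightarrow> (nat \<Rightarrow> 'a::field) set \<Rightarrow> (nat \<Rightarrow> 'a) set \<Rightarrow> bool" where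
  "l_intersection_pair l C1 C2 \<longleftrightarrow> code_dim (C1 \<inter> C2) = l"

end

theory Submission
  imports Defs "HOL-Number_Theory.Residues" "HOL-Computational_Algebra.Polynomial"
begin

(* Take the [q+2,3] code whose generator matrix has the columns (1,t,t^2) for t in F_q together
   with (0,1,0) and (0,0,1). For even q these q+2 points form a hyperoval: a conic together with
   its nucleus. The zero coordinates of a nonzero codeword are the points of the hyperoval on a
   line, and a line meets a hyperoval in at most two points, so the code is MDS with minimum
   distance q. Rescaling 3 - l of the coordinates q+1, q, 0 by some r not in {0,1} gives a second
   MDS code. A word lying in both codes is, on the q - 1 >= 3 unscaled affine coordinates, the
   evaluation of one and the same quadratic, so it must vanish at the rescaled coordinates; these
   words are exactly the span of the first l rows. *)

lemma two_eq_zero_if_card_power_of_two: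
  assumes "card (UNIV :: 'a::{idom,finite} set) = 2 ^ m" and "m > 0"
  shows "(2::'a) = 0"
proof -
  have "of_nat (card (UNIV :: 'a set)) = (0::'a)"
    using CHAR_dvd_CARD by (simp add: of_nat_eq_0_iff_char_dvd)
  then have "(2::'a) ^ m = 0"
    using assms(1) by simp
  then show ?thesis
    by simp
qed

lemma square_inj_char_two:
  fixes x y :: "'a::idom"
  assumes "(2::'a) = 0" and "x ^ 2 = y ^ 2"
  shows "x = y"
proof -
  have "(x - y) ^ 2 = x ^ 2 - y ^ 2 - 2 * y * (x - y)"
    by (simp add: power2_eq_square algebra_simps)
  then have "(x - y) ^ 2 = 0"
    using assms by simp
  then show ?thesis
    by simp
qed

lemma card_roots_square_plus_const_le_1:
  fixes a c :: "'a::idom"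
  assumes "(2::'a) = 0" and "c \<noteq> 0"
  shows "card {t. poly [:a, 0, c:] t = 0} \<le> 1"
proof -
  have "finite {t. poly [:a, 0, c:] t = 0}"
    using assms(2) by (intro poly_roots_finite) simp
  moreover have "x = y" if "poly [:a, 0, c:] x = 0" and "poly [:a, 0, c:] y = 0" for x y
  proof -
    have "c * (x ^ 2 - y ^ 2) = poly [:a, 0, c:] x - poly [:a, 0, c:] y"
      by (simp add: power2_eq_square algebra_simps)
    also have "\<dots> = 0"
      using that by simp
    finally have "x ^ 2 = y ^ 2"
      using assms(2) by simp
    with assms(1) show ?thesis
      by (rule square_inj_char_two)
  qed
  ultimately show ?thesis
    using card_le_Suc0_iff_eq by (metis (mono_tags, lifting) One_nat_def mem_Collect_eq)
qed

(* A line aX + bY + cZ = 0 meets the hyperoval {(1,t,t^2)} \<union> {(0,1,0), (0,0,1)} in at most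
   two points. *)
lemma card_roots_quadratic_hyperoval:
  fixes a b c :: "'a::idom"
  assumes "(2::'a) = 0" and "[:a, b, c:] \<noteq> 0"
  shows "card {t. poly [:a, b, c:] t = 0} + of_bool (b = 0) + of_bool (c = 0) \<le> 2"
proof (cases "b = 0 \<and> c \<noteq> 0")
  case True
  then show ?thesis
    using card_roots_square_plus_const_le_1[OF assms(1)] by auto
next
  case False
  have "card {t. poly [:a, b, c:] t = 0} \<le> degree [:a, b, c:]"
    using card_poly_roots_bound assms(2) by blast
  moreover have "degree [:a, b, c:] + of_bool (b = 0) + of_bool (c = 0) \<le> 2"
    using False assms(2) by (auto simp: degree_pCons_le)
  ultimately show ?thesis
    by linarith
qed

lemma ex_neq_0_1:
  assumes "2 < card (UNIV :: 'a::zero_neq_one set)"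
  shows "\<exists>r :: 'a. r \<noteq> 0 \<and> r \<noteq> 1"
proof -
  have "card {0, 1 :: 'a} \<le> 2"
    by (simp add: card_insert_if)
  with assms have "UNIV \<noteq> {0, 1 :: 'a}"
    by (metis not_less)
  then show ?thesis
    by blast
qed

global_interpretation V: vector_space "vscale :: 'a::field \<Rightarrow> (nat \<Rightarrow> 'a) \<Rightarrow> _"
  by (rule vector_space_vscale)

lemma hamming_dist_le: "hamming_dist n x y \<le> n"
  unfolding hamming_dist_def by (rule order.trans[OF card_mono[of "{..<n}"]]) auto

lemma min_dist_linear_eqI:
  fixes C :: "(nat \<Rightarrow> 'a::field) set"
  assumes "V.subspace C"
    and "\<And>x. x \<in> C \<Longrightarrow> x \<noteq> 0 \<Longrightarrow> d \<le> hamming_dist n x 0"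
    and "w \<in> C" "w \<noteq> 0" "hamming_dist n w 0 = d"
  shows "min_dist n C = d"
  unfolding min_dist_def
proof (rule Min_eqI)
  show "finite {hamming_dist n x y |x y. x \<in> C \<and> y \<in> C \<and> x \<noteq> y}"
    by (rule finite_subset[of _ "{..n}"]) (auto simp: hamming_dist_le)
next
  fix h
  assume "h \<in> {hamming_dist n x y |x y. x \<in> C \<and> y \<in> C \<and> x \<noteq> y}"
  then obtain x y where "x \<in> C" "y \<in> C" "x \<noteq> y" "h = hamming_dist n x y"
    by blast
  moreover have "hamming_dist n x y = hamming_dist n (x - y) 0"
    by (simp add: hamming_dist_def)
  ultimately show "d \<le> h"
    using assms(1,2) V.subspace_diff by fastforce
next
  show "d \<in> {hamming_dist n x y |x y. x \<in> C \<and> y \<in> C \<and> x \<noteq> y}"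
    using assms(1,3-5) V.subspace_0 by blast
qed

definition coeffs_vanish_from :: "nat \<Rightarrow> 'a::zero \<Rightarrow> 'a \<Rightarrow> 'a \<Rightarrow> bool" where
  "coeffs_vanish_from k a b c \<longleftrightarrow> (k = 0 \<longrightarrow> a = 0) \<and> (k \<le> 1 \<longrightarrow> b = 0) \<and> (k \<le> 2 \<longrightarrow> c = 0)"

lemma coeffs_vanish_from_3 [simp]: "coeffs_vanish_from 3 a b c"
  by (simp add: coeffs_vanish_from_def)

locale field_enumeration =
  fixes e :: "nat \<Rightarrow> 'a::{field,finite}" and q :: nat
  assumes enum: "bij_betw e {..<q} UNIV"
begin

lemma card_UNIV_eq: "card (UNIV :: 'a set) = q"
  using bij_betw_same_card[OF enum] by simp

lemma q_pos: "0 < q"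
  using card_UNIV_eq finite_UNIV_card_ge_0[where 'a='a] by simp

definition hyperoval_word :: "'a \<Rightarrow> 'a \<Rightarrow> 'a \<Rightarrow> nat \<Rightarrow> 'a" where
  "hyperoval_word a b c i =
    (if i < q then poly [:a, b, c:] (e i) else if i = q then b else if i = Suc q then c else 0)"

definition hyperoval_code :: "(nat \<Rightarrow> 'a) \<Rightarrow> nat \<Rightarrow> (nat \<Rightarrow> 'a) set" where
  "hyperoval_code D k = {D * hyperoval_word a b c | a b c. coeffs_vanish_from k a b c}"

definition hyperoval_row :: "(nat \<Rightarrow> 'a) \<Rightarrow> nat \<Rightarrow> nat \<Rightarrow> 'a" where
  "hyperoval_row D j = D * hyperoval_word (of_bool (j = 0)) (of_bool (j = 1)) (of_bool (j = 2))"

lemma hyperoval_word_0_0_0 [simp]: "hyperoval_word 0 0 0 = 0"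
  by (simp add: hyperoval_word_def fun_eq_iff)

lemma hyperoval_word_add:
  "hyperoval_word a b c + hyperoval_word a' b' c' = hyperoval_word (a + a') (b + b') (c + c')"
  by (simp add: hyperoval_word_def fun_eq_iff algebra_simps)

lemma vscale_hyperoval_word:
  "vscale x (D * hyperoval_word a b c) = D * hyperoval_word (x * a) (x * b) (x * c)"
  by (simp add: hyperoval_word_def vscale_def fun_eq_iff algebra_simps)

lemma hyperoval_word_eq_rows:
  "D * hyperoval_word a b c =
     vscale a (hyperoval_row D 0) + vscale b (hyperoval_row D 1) + vscale c (hyperoval_row D 2)"
  by (simp add: hyperoval_row_def hyperoval_word_def vscale_def fun_eq_iff algebra_simps)

lemma hyperoval_word_ambient: "D * hyperoval_word a b c \<in> ambient (q + 2)"
  by (simp add: ambient_def hyperoval_word_def)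

lemma rescaled_hyperoval_word_inject:
  assumes D: "\<forall>i < q + 2. D i \<noteq> 0"
    and eq: "D * hyperoval_word a b c = D * hyperoval_word a' b' c'"
  shows "a = a' \<and> b = b' \<and> c = c'"
proof -
  have "c = c'" "b = b'"
    using fun_cong[OF eq, of "Suc q"] fun_cong[OF eq, of q] D by (simp_all add: hyperoval_word_def)
  moreover from this have "a = a'"
    using fun_cong[OF eq, of 0] D q_pos by (simp add: hyperoval_word_def)
  ultimately show ?thesis
    by simp
qed

lemma subspace_hyperoval_code: "V.subspace (hyperoval_code D k)"
proof (rule V.subspaceI)
  show "0 \<in> hyperoval_code D k"
    unfolding hyperoval_code_def coeffs_vanish_from_def
    by (rule CollectI, intro exI[of _ 0]) simp
next
  fix x y
  assume "x \<in> hyperoval_code D k" "y \<in> hyperoval_code D k"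
  then obtain a b c a' b' c' where
    "x = D * hyperoval_word a b c" "coeffs_vanish_from k a b c"
    "y = D * hyperoval_word a' b' c'" "coeffs_vanish_from k a' b' c'"
    unfolding hyperoval_code_def by blast
  then have "x + y = D * hyperoval_word (a + a') (b + b') (c + c')"
    and "coeffs_vanish_from k (a + a') (b + b') (c + c')"
    by (simp_all add: distrib_left hyperoval_word_add[symmetric] coeffs_vanish_from_def)
  then show "x + y \<in> hyperoval_code D k"
    unfolding hyperoval_code_def by blast
next
  fix x and r :: 'a
  assume "x \<in> hyperoval_code D k"
  then obtain a b c where "x = D * hyperoval_word a b c" "coeffs_vanish_from k a b c"
    unfolding hyperoval_code_def by blast
  then have "vscale r x = D * hyperoval_word (r * a) (r * b) (r * c)"
    and "coeffs_vanish_from k (r * a) (r * b) (r * c)"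
    by (simp_all add: vscale_hyperoval_word coeffs_vanish_from_def)
  then show "vscale r x \<in> hyperoval_code D k"
    unfolding hyperoval_code_def by blast
qed

lemma hyperoval_code_eq_span:
  assumes "k \<le> 3"
  shows "hyperoval_code D k = V.span (hyperoval_row D ` {..<k})"
proof (rule V.span_subspace[symmetric])
  show "hyperoval_row D ` {..<k} \<subseteq> hyperoval_code D k"
  proof
    fix x
    assume "x \<in> hyperoval_row D ` {..<k}"
    then obtain j where "j < k" and x: "x = hyperoval_row D j"
      by blast
    then have "coeffs_vanish_from k (of_bool (j = 0)) (of_bool (j = 1)) (of_bool (j = 2))"
      by (auto simp: coeffs_vanish_from_def)
    then show "x \<in> hyperoval_code D k"
      unfolding x hyperoval_row_def hyperoval_code_def by blast
  qed
next
  show "hyperoval_code D k \<subseteq> V.span (hyperoval_row D ` {..<k})"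
  proof
    fix x
    assume "x \<in> hyperoval_code D k"
    then obtain a b c where x: "x = D * hyperoval_word a b c" and "coeffs_vanish_from k a b c"
      unfolding hyperoval_code_def by blast
    then have coeffs: "0 < k \<or> a = 0" "1 < k \<or> b = 0" "2 < k \<or> c = 0"
      by (auto simp: coeffs_vanish_from_def)
    have scaled_row: "vscale r (hyperoval_row D j) \<in> V.span (hyperoval_row D ` {..<k})"
      if "j < k \<or> r = 0" for j r
    proof (cases "r = 0")
      case True
      then show ?thesis
        using V.span_zero by simp
    next
      case False
      with that show ?thesis
        by (intro V.span_scale V.span_base) simp
    qed
    show "x \<in> V.span (hyperoval_row D ` {..<k})"
      unfolding x hyperoval_word_eq_rows
      by (intro V.span_add scaled_row coeffs)
  qed
next
  show "V.subspace (hyperoval_code D k)"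
    by (rule subspace_hyperoval_code)
qed

lemma inj_on_hyperoval_row:
  assumes "\<forall>i < q + 2. D i \<noteq> 0"
  shows "inj_on (hyperoval_row D) {..<3}"
proof (rule inj_onI)
  fix i j :: nat
  assume "i \<in> {..<3}" "j \<in> {..<3}" and eq: "hyperoval_row D i = hyperoval_row D j"
  have "of_bool (i = 0) = (of_bool (j = 0) :: 'a) \<and> of_bool (i = 1) = (of_bool (j = 1) :: 'a) \<and>
      of_bool (i = 2) = (of_bool (j = 2) :: 'a)"
    by (rule rescaled_hyperoval_word_inject[OF assms]) (use eq in \<open>simp add: hyperoval_row_def\<close>)
  with \<open>i \<in> {..<3}\<close> \<open>j \<in> {..<3}\<close> show "i = j"
    by (simp add: of_bool_eq_iff) presburger
qed

lemma independent_hyperoval_rows: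
  assumes D: "\<forall>i < q + 2. D i \<noteq> 0"
  shows "V.independent (hyperoval_row D ` {..<3})"
proof (rule V.independent_if_scalars_zero)
  fix f x
  assume sum: "(\<Sum>x\<in>hyperoval_row D ` {..<3}. vscale (f x) x) = 0"
    and x: "x \<in> hyperoval_row D ` {..<3}"
  let ?u = "\<lambda>j. f (hyperoval_row D j)"
  have three: "{..<3::nat} = {0, 1, 2}"
    by auto
  have "D * hyperoval_word (?u 0) (?u 1) (?u 2) = (\<Sum>j<3. vscale (?u j) (hyperoval_row D j))"
    unfolding three by (simp add: hyperoval_word_eq_rows add_ac)
  also have "\<dots> = 0"
    using sum by (simp add: sum.reindex[OF inj_on_hyperoval_row[OF D]])
  also have "\<dots> = D * hyperoval_word 0 0 0"
    by simp
  finally have "?u 0 = 0 \<and> ?u 1 = 0 \<and> ?u 2 = 0"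
    by (rule rescaled_hyperoval_word_inject[OF D])
  then show "f x = 0"
    using x unfolding three by auto
qed simp

lemma dim_hyperoval_code:
  assumes "\<forall>i < q + 2. D i \<noteq> 0" and "k \<le> 3"
  shows "V.dim (hyperoval_code D k) = k"
proof -
  have "V.independent (hyperoval_row D ` {..<k})"
    by (rule V.independent_mono[OF independent_hyperoval_rows[OF assms(1)]]) (use assms(2) in auto)
  then have "V.dim (hyperoval_code D k) = card (hyperoval_row D ` {..<k})"
    using hyperoval_code_eq_span[OF assms(2)] V.dim_span_eq_card_independent by simp
  also have "\<dots> = k"
    using inj_on_subset[OF inj_on_hyperoval_row[OF assms(1)]] assms(2)
    by (simp add: card_image)
  finally show ?thesis .
qed

lemma card_zeros_rescaled_hyperoval_word:
  assumes "(2::'a) = 0" and D: "\<forall>i < q + 2. D i \<noteq> 0" and "[:a, b, c:] \<noteq> 0"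
  shows "card {i. i < q + 2 \<and> (D * hyperoval_word a b c) i = 0} \<le> 2"
proof -
  let ?R = "{i. i < q \<and> poly [:a, b, c:] (e i) = 0}"
  have "card ?R \<le> card {t. poly [:a, b, c:] t = 0}"
    using enum by (intro card_inj_on_le[of e]) (auto simp: bij_betw_def intro: inj_on_subset)
  have "{i. i < q + 2 \<and> (D * hyperoval_word a b c) i = 0}
      \<subseteq> ?R \<union> {i. i = q \<and> b = 0} \<union> {i. i = Suc q \<and> c = 0}"
    using D by (auto simp: hyperoval_word_def)
  then have "card {i. i < q + 2 \<and> (D * hyperoval_word a b c) i = 0}
      \<le> card (?R \<union> {i. i = q \<and> b = 0} \<union> {i. i = Suc q \<and> c = 0})"
    by (intro card_mono) auto
  also have "\<dots> \<le> card ?R + of_bool (b = 0) + of_bool (c = 0)"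
    using card_Un_le[of ?R] card_Un_le[of "?R \<union> {i. i = q \<and> b = 0}"] by simp
  also have "\<dots> \<le> 2"
    using \<open>card ?R \<le> _\<close> card_roots_quadratic_hyperoval[OF assms(1,3)] by linarith
  finally show ?thesis .
qed

lemma weight_rescaled_hyperoval_word:
  assumes "(2::'a) = 0" and "\<forall>i < q + 2. D i \<noteq> 0" and "[:a, b, c:] \<noteq> 0"
  shows "q \<le> hamming_dist (q + 2) (D * hyperoval_word a b c) 0"
proof -
  let ?Z = "{i. i < q + 2 \<and> (D * hyperoval_word a b c) i = 0}"
  have "hamming_dist (q + 2) (D * hyperoval_word a b c) 0 = card ({..<q + 2} - ?Z)"
    unfolding hamming_dist_def by (rule arg_cong[of _ _ card]) auto
  also have "\<dots> = q + 2 - card ?Z"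
    by (subst card_Diff_subset) auto
  finally show ?thesis
    using card_zeros_rescaled_hyperoval_word[OF assms] by linarith
qed

lemma min_dist_hyperoval_code:
  assumes "(2::'a) = 0" and D: "\<forall>i < q + 2. D i \<noteq> 0"
  shows "min_dist (q + 2) (hyperoval_code D 3) = q"
proof (rule min_dist_linear_eqI[OF subspace_hyperoval_code])
  fix x
  assume "x \<in> hyperoval_code D 3" "x \<noteq> 0"
  then obtain a b c where x: "x = D * hyperoval_word a b c"
    unfolding hyperoval_code_def by blast
  with \<open>x \<noteq> 0\<close> have "[:a, b, c:] \<noteq> 0"
    by auto
  with x show "q \<le> hamming_dist (q + 2) x 0"
    using weight_rescaled_hyperoval_word[OF assms] by simp
next
  show "D * hyperoval_word 1 0 0 \<in> hyperoval_code D 3"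
    unfolding hyperoval_code_def coeffs_vanish_from_def by auto
  show "D * hyperoval_word 1 0 0 \<noteq> 0"
    using D q_pos by (auto simp: fun_eq_iff hyperoval_word_def intro!: exI[of _ 0])
  have "{i. i < q + 2 \<and> (D * hyperoval_word 1 0 0) i \<noteq> 0} = {..<q}"
    using D by (auto simp: hyperoval_word_def)
  then show "hamming_dist (q + 2) (D * hyperoval_word 1 0 0) 0 = q"
    by (simp add: hamming_dist_def)
qed

lemma hyperoval_code_MDS:
  assumes "(2::'a) = 0" and "\<forall>i < q + 2. D i \<noteq> 0"
  shows "is_nkd_code (q + 2) 3 q (hyperoval_code D 3) \<and> is_MDS (q + 2) (hyperoval_code D 3)"
proof -
  have "hyperoval_code D 3 \<subseteq> ambient (q + 2)"
    unfolding hyperoval_code_def using hyperoval_word_ambient by blast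
  then have "linear_code (q + 2) (hyperoval_code D 3)"
    using subspace_hyperoval_code by (simp add: linear_code_def)
  then show ?thesis
    using dim_hyperoval_code[OF assms(2)] min_dist_hyperoval_code[OF assms] q_pos
    by (simp add: is_nkd_code_def is_MDS_def code_dim_def)
qed

lemma hyperoval_code_Int_rescaled:
  assumes "3 \<le> card {i. i < q \<and> D i = 1}"
  shows "hyperoval_code 1 3 \<inter> hyperoval_code D 3 =
    {hyperoval_word a b c | a b c. \<forall>i. D i \<noteq> 1 \<longrightarrow> hyperoval_word a b c i = 0}"
proof (intro equalityI subsetI)
  fix v
  assume "v \<in> hyperoval_code 1 3 \<inter> hyperoval_code D 3"
  then obtain a b c a' b' c'
    where "v = 1 * hyperoval_word a b c" "v = D * hyperoval_word a' b' c'"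
    unfolding hyperoval_code_def by blast
  then have v: "v = hyperoval_word a b c" "v = D * hyperoval_word a' b' c'"
    by simp_all
  let ?S = "{i. i < q \<and> D i = 1}"
  have "[:a, b, c:] = [:a', b', c':]"
  proof (rule poly_eqI_degree)
    fix t
    assume "t \<in> e ` ?S"
    then obtain i where "i < q" "D i = 1" "t = e i"
      by blast
    then show "poly [:a, b, c:] t = poly [:a', b', c':] t"
      using fun_cong[OF v(1)[symmetric, unfolded v(2)], of i] by (simp add: hyperoval_word_def)
  next
    have "card (e ` ?S) = card ?S"
      using enum by (intro card_image) (auto simp: bij_betw_def intro: inj_on_subset)
    then show "degree [:a, b, c:] < card (e ` ?S)" "degree [:a', b', c':] < card (e ` ?S)"
      using assms by (simp_all add: degree_pCons_le le_less_trans)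
  qed
  then have "v = D * v"
    using v by simp
  have "hyperoval_word a b c i = 0" if "D i \<noteq> 1" for i
  proof -
    have "(1 - D i) * v i = 0"
      using fun_cong[OF \<open>v = D * v\<close>, of i] by (simp add: algebra_simps)
    with that v(1) show ?thesis
      by simp
  qed
  then show "v \<in> {hyperoval_word a b c | a b c. \<forall>i. D i \<noteq> 1 \<longrightarrow> hyperoval_word a b c i = 0}"
    using v(1) by blast
next
  fix v
  assume "v \<in> {hyperoval_word a b c | a b c. \<forall>i. D i \<noteq> 1 \<longrightarrow> hyperoval_word a b c i = 0}"
  then obtain a b c where "v = hyperoval_word a b c"
    and "\<forall>i. D i \<noteq> 1 \<longrightarrow> hyperoval_word a b c i = 0"
    by blast
  then have "v = 1 * hyperoval_word a b c" "v = D * hyperoval_word a b c"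
    by (auto simp: fun_eq_iff)
  then show "v \<in> hyperoval_code 1 3 \<inter> hyperoval_code D 3"
    unfolding hyperoval_code_def using coeffs_vanish_from_3 by blast
qed

definition rescaling :: "'a \<Rightarrow> nat \<Rightarrow> nat \<Rightarrow> 'a" where
  "rescaling r l i = (if i \<in> set (take (3 - l) [Suc q, q, 0]) then r else 1)"

lemma hyperoval_word_vanishing_iff:
  assumes "l \<le> 3"
  shows "(\<forall>i \<in> set (take (3 - l) [Suc q, q, 0]). hyperoval_word a b c i = 0) \<longleftrightarrow>
    coeffs_vanish_from l a b c"
proof -
  have at_q: "hyperoval_word a b c q = b" and at_Suc_q: "hyperoval_word a b c (Suc q) = c"
    and at_0: "hyperoval_word a 0 0 0 = a"
    using q_pos by (simp_all add: hyperoval_word_def)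
  consider "l = 0" | "l = 1" | "l = 2" | "l = 3"
    using assms by linarith
  then show ?thesis
    by cases (auto simp: coeffs_vanish_from_def at_q at_Suc_q at_0)
qed

lemma hyperoval_code_Int_rescaling:
  assumes "l \<le> 3" and "r \<noteq> 1" and "4 \<le> q"
  shows "hyperoval_code 1 3 \<inter> hyperoval_code (rescaling r l) 3 = hyperoval_code 1 l"
proof -
  have "{1..<q} \<subseteq> {i. i < q \<and> rescaling r l i = 1}"
    by (auto simp: rescaling_def dest: in_set_takeD)
  then have "3 \<le> card {i. i < q \<and> rescaling r l i = 1}"
    using card_mono[of "{i. i < q \<and> rescaling r l i = 1}" "{1..<q}"] assms(3) by simp
  then have "hyperoval_code 1 3 \<inter> hyperoval_code (rescaling r l) 3 =
      {hyperoval_word a b c | a b c. \<forall>i. rescaling r l i \<noteq> 1 \<longrightarrow> hyperoval_word a b c i = 0}"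
    by (rule hyperoval_code_Int_rescaled)
  also have "\<dots> = {hyperoval_word a b c | a b c. coeffs_vanish_from l a b c}"
  proof -
    have "(\<forall>i. rescaling r l i \<noteq> 1 \<longrightarrow> hyperoval_word a b c i = 0) \<longleftrightarrow>
        coeffs_vanish_from l a b c" for a b c
      using hyperoval_word_vanishing_iff[OF assms(1), of a b c] assms(2)
      by (auto simp: rescaling_def)
    then show ?thesis
      by simp
  qed
  also have "\<dots> = hyperoval_code 1 l"
    by (simp add: hyperoval_code_def)
  finally show ?thesis .
qed

lemma ex_MDS_intersection_pair:
  assumes "(2::'a) = 0" and "4 \<le> q" and "l \<le> 3"
  shows "\<exists>C1 C2 :: (nat \<Rightarrow> 'a) set.
    is_nkd_code (q + 2) 3 q C1 \<and> is_MDS (q + 2) C1 \<and>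
    is_nkd_code (q + 2) 3 q C2 \<and> is_MDS (q + 2) C2 \<and> l_intersection_pair l C1 C2"
proof -
  have "2 < card (UNIV :: 'a set)"
    using assms(2) card_UNIV_eq by simp
  then obtain r :: 'a where "r \<noteq> 0" "r \<noteq> 1"
    using ex_neq_0_1 by blast
  let ?C1 = "hyperoval_code 1 3" and ?C2 = "hyperoval_code (rescaling r l) 3"
  have "is_nkd_code (q + 2) 3 q ?C1 \<and> is_MDS (q + 2) ?C1"
    by (rule hyperoval_code_MDS[OF assms(1)]) simp
  moreover have "is_nkd_code (q + 2) 3 q ?C2 \<and> is_MDS (q + 2) ?C2"
    by (rule hyperoval_code_MDS[OF assms(1)]) (simp add: rescaling_def \<open>r \<noteq> 0\<close>)
  moreover have "l_intersection_pair l ?C1 ?C2"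
    using dim_hyperoval_code[of 1 l] assms(3)
    by (simp add: l_intersection_pair_def code_dim_def
        hyperoval_code_Int_rescaling[OF assms(3) \<open>r \<noteq> 1\<close> assms(2)])
  ultimately show ?thesis
    by blast
qed

end

theorem theorem6:
  fixes m l :: nat
  assumes "card (UNIV :: 'a::{field,finite} set) = 2 ^ m"
    and "2 ^ m > (4::nat)"
    and "l \<le> 3"
  shows "\<exists>C1 C2 :: (nat \<Rightarrow> 'a) set.
           is_nkd_code (card (UNIV :: 'a set) + 2) 3 (card (UNIV :: 'a set)) C1 \<and>
           is_MDS (card (UNIV :: 'a set) + 2) C1 \<and>
           is_nkd_code (card (UNIV :: 'a set) + 2) 3 (card (UNIV :: 'a set)) C2 \<and>
           is_MDS (card (UNIV :: 'a set) + 2) C2 \<and>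
           l_intersection_pair l C1 C2"
proof -
  obtain e :: "nat \<Rightarrow> 'a" where "bij_betw e {..<card (UNIV :: 'a set)} UNIV"
    using ex_bij_betw_nat_finite[of "UNIV :: 'a set"] by (auto simp: atLeast0LessThan)
  then interpret field_enumeration e "card (UNIV :: 'a set)"
    by unfold_locales
  have "(2::'a) = 0"
    using two_eq_zero_if_card_power_of_two[OF assms(1)] assms(2) by (cases m) auto
  moreover have "4 \<le> card (UNIV :: 'a set)"
    using assms(1,2) by simp
  ultimately show ?thesis
    using ex_MDS_intersection_pair assms(3) by blast
qed

end
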